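(* Let $\mathcal{L}$ be a language with semantic structure $\mathcal{S}=(\Sigma,I)$ and let $A$ be an abstract domain of $\wp(\Sigma)_\subseteq$ with Galois insertion $(\alpha,\wp(\Sigma),A,\gamma)$. (1) If $\mathcal{S}^\sharp_1=(A,I^\sharp_1)$ and $\mathcal{S}^\sharp_2=(A,I^\sharp_2)$ are abstract semantic structures on $A$ whose abstract semantics $[\![\cdot]\!]_{\mathcal{S}^\sharp_1}$ and $[\![\cdot]\!]_{\mathcal{S}^\sharp_2}$ are both strongly preserving for $\mathcal{L}$, then $[\![\cdot]\!]_{\mathcal{S}^\sharp_1}=[\![\cdot]\!]_{\mathcal{S}^\sharp_2}$. (2) If $\mathcal{S}^\sharp=(A,I^\sharp)$ is an abstract semantic structure on $A$ whose abstract semantics is strongly preserving for $\mathcal{L}$, then the abstract semantics $[\![\cdot]\!]^A_{\mathcal{S}}$ induced by $A$ is strongly preserving for $\mathcal{L}$.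
   Context: A language $\mathcal{L}$ has formulae $\varphi::=p\mid f(\varphi_1,\dots,\varphi_n)$, $p$ in a set $AP$ of atoms, $f$ in a finite set $Op$ of operators of arity $\ge1$. A semantic structure $\mathcal{S}=(\Sigma,I)$ gives $\mathbf{p}=I(p)\subseteq\Sigma$ and $\mathbf{f}=I(f):\wp(\Sigma)^{n}\to\wp(\Sigma)$, with $[\![p]\!]_{\mathcal{S}}=\mathbf{p}$, $[\![f(\varphi_1,..,\varphi_n)]\!]_{\mathcal{S}}=\mathbf{f}([\![\varphi_1]\!]_{\mathcal{S}},..,[\![\varphi_n]\!]_{\mathcal{S}})$. A Galois insertion $(\alpha,\wp(\Sigma),A,\gamma)$: $A$ complete lattice, monotone $\alpha,\gamma$ with $\alpha(S)\le_A a\iff S\subseteq\gamma(a)$, $\alpha\circ\gamma=\mathrm{id}$. An abstract semantic structure $(A,I^\sharp)$ assigns $I^\sharp(p)\in A$, $I^\sharp(f):A^n\to A$ and induces $[\![\cdot]\!]_{\mathcal{S}^\sharp}:\mathcal{L}\to A$ compositionally. The abstract semantics induced by $A$ is that of the structure $(A,I^A)$ with $I^A(p)=\alpha(\mathbf{p})$, $I^A(f)=\alpha\circ\mathbf{f}\circ(\gamma,\dots,\gamma)$; it is written $[\![\cdot]\!]^A_{\mathcal{S}}$. An abstract semantics $[\![\cdot]\!]^\sharp:\mathcal{L}\to A$ is strongly preserving for $\mathcal{L}$ if for all $\varphi\in\mathcal{L}$, $S\subseteq\Sigma$: $\alpha(S)\le_A[\![\varphi]\!]^\sharp\iff S\subseteq[\![\varphi]\!]_{\mathcal{S}}$.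 *)

theory Defs
  imports Main
begin

text \<open>The arity of each operator is given by a function ar; the language L consists
  of the well-formed formulae (each operator applied to exactly ar f arguments).\<close>

datatype ('ap, 'op) formula = Atom 'ap | App 'op "('ap, 'op) formula list"

primrec wf_formula :: "('op \<Rightarrow> nat) \<Rightarrow> ('ap, 'op) formula \<Rightarrow> bool" where
  "wf_formula ar (Atom p) = True"
| "wf_formula ar (App f xs) = (length xs = ar f \<and> list_all id (map (wf_formula ar) xs))"

text \<open>Compositional semantics induced by an interpretation (of atoms and operators)
  into any carrier (concrete: 's set; abstract: the domain 'a). An n-ary operator
  is interpreted as a function on lists (only used on lists of length n).\<close>

primrec sem :: "('ap \<Rightarrow> 'b) \<Rightarrow> ('op \<Rightarrow> 'b list \<Rightarrow> 'b) \<Rightarrow> ('ap, 'op) formula \<Rightarrow> 'b" where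
  "sem IP IF (Atom p) = IP p"
| "sem IP IF (App f xs) = IF f (map (sem IP IF) xs)"

definition galois_insertion :: "('s set \<Rightarrow> 'a::complete_lattice) \<Rightarrow> ('a \<Rightarrow> 's set) \<Rightarrow> bool" where
  "galois_insertion \<alpha> \<gamma> \<longleftrightarrow> mono \<alpha> \<and> mono \<gamma> \<and>
     (\<forall>S a. \<alpha> S \<le> a \<longleftrightarrow> S \<subseteq> \<gamma> a) \<and> (\<forall>a. \<alpha> (\<gamma> a) = a)"

definition strongly_preserving ::
  "('op \<Rightarrow> nat) \<Rightarrow> ('s set \<Rightarrow> 'a::complete_lattice)
   \<Rightarrow> (('ap, 'op) formula \<Rightarrow> 's set) \<Rightarrow> (('ap, 'op) formula \<Rightarrow> 'a) \<Rightarrow> bool" where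
  "strongly_preserving ar \<alpha> csem asem \<longleftrightarrow>
     (\<forall>\<phi> S. wf_formula ar \<phi> \<longrightarrow> (\<alpha> S \<le> asem \<phi> \<longleftrightarrow> S \<subseteq> csem \<phi>))"

definition induced_IP :: "('s set \<Rightarrow> 'a) \<Rightarrow> ('ap \<Rightarrow> 's set) \<Rightarrow> 'ap \<Rightarrow> 'a" where
  "induced_IP \<alpha> P p = \<alpha> (P p)"

definition induced_IF :: "('s set \<Rightarrow> 'a) \<Rightarrow> ('a \<Rightarrow> 's set) \<Rightarrow> ('op \<Rightarrow> 's set list \<Rightarrow> 's set)
    \<Rightarrow> 'op \<Rightarrow> 'a list \<Rightarrow> 'a" where
  "induced_IF \<alpha> \<gamma> F f as = \<alpha> (F f (map \<gamma> as))"

end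

theory Submission
  imports Defs
begin

text \<open>Under a Galois insertion, strong preservation pins the abstract semantics down completely:
  it holds exactly when every formula denotes \<open>\<alpha>\<close> of its concrete meaning and that meaning is
  exactly representable (\<open>\<gamma> \<circ> \<alpha>\<close>-closed). For part (2), closedness
  depends only on the concrete semantics, and by induction on formulae it makes the
  semantics induced by \<open>A\<close> equal to \<open>\<alpha>\<close> of the concrete one.\<close>

lemma galois_insertion_adjoint:
  "galois_insertion \<alpha> \<gamma> \<Longrightarrow> \<alpha> S \<le> a \<longleftrightarrow> S \<subseteq> \<gamma> a"
  unfolding galois_insertion_def by blast

lemma galois_insertion_alpha_gamma:
  "galois_insertion \<alpha> \<gamma> \<Longrightarrow> \<alpha> (\<gamma> a) = a"
  unfolding galois_insertion_def by blast

lemma strongly_preserving_iff_closed: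
  fixes csem :: "('ap, 'op) formula \<Rightarrow> 's set" and asem :: "('ap, 'op) formula \<Rightarrow> 'a::complete_lattice"
  assumes GI: "galois_insertion \<alpha> \<gamma>"
  shows "strongly_preserving ar \<alpha> csem asem \<longleftrightarrow>
    (\<forall>\<phi>. wf_formula ar \<phi> \<longrightarrow> asem \<phi> = \<alpha> (csem \<phi>) \<and> \<gamma> (\<alpha> (csem \<phi>)) = csem \<phi>)"
proof
  assume sp: "strongly_preserving ar \<alpha> csem asem"
  show "\<forall>\<phi>. wf_formula ar \<phi> \<longrightarrow> asem \<phi> = \<alpha> (csem \<phi>) \<and> \<gamma> (\<alpha> (csem \<phi>)) = csem \<phi>"
  proof (intro allI impI)
    fix \<phi> :: "('ap, 'op) formula"
    assume wf: "wf_formula ar \<phi>"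
    have "S \<subseteq> \<gamma> (asem \<phi>) \<longleftrightarrow> S \<subseteq> csem \<phi>" for S
      using sp wf galois_insertion_adjoint[OF GI] unfolding strongly_preserving_def by blast
    then have gamma_asem: "\<gamma> (asem \<phi>) = csem \<phi>"
      by blast
    then have "asem \<phi> = \<alpha> (csem \<phi>)"
      using galois_insertion_alpha_gamma[OF GI] by metis
    with gamma_asem show "asem \<phi> = \<alpha> (csem \<phi>) \<and> \<gamma> (\<alpha> (csem \<phi>)) = csem \<phi>"
      by simp
  qed
next
  assume "\<forall>\<phi>. wf_formula ar \<phi> \<longrightarrow> asem \<phi> = \<alpha> (csem \<phi>) \<and> \<gamma> (\<alpha> (csem \<phi>)) = csem \<phi>"
  then show "strongly_preserving ar \<alpha> csem asem"
    unfolding strongly_preserving_def by (metis galois_insertion_adjoint[OF GI])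
qed

lemma sem_induced_eq_alpha:
  assumes closed: "\<forall>\<psi>. wf_formula ar \<psi> \<longrightarrow> \<gamma> (\<alpha> (sem P F \<psi>)) = sem P F \<psi>"
  shows "wf_formula ar \<phi> \<Longrightarrow> sem (induced_IP \<alpha> P) (induced_IF \<alpha> \<gamma> F) \<phi> = \<alpha> (sem P F \<phi>)"
proof (induction \<phi>)
  case (Atom p)
  then show ?case by (simp add: induced_IP_def)
next
  case (App f xs)
  then have "wf_formula ar x" if "x \<in> set xs" for x
    using that by (simp add: list_all_iff)
  with App.IH closed
  have args: "map (\<gamma> \<circ> sem (induced_IP \<alpha> P) (induced_IF \<alpha> \<gamma> F)) xs = map (sem P F) xs"
    by (intro map_cong) simp_all
  have "sem (induced_IP \<alpha> P) (induced_IF \<alpha> \<gamma> F) (App f xs)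
      = \<alpha> (F f (map (\<gamma> \<circ> sem (induced_IP \<alpha> P) (induced_IF \<alpha> \<gamma> F)) xs))"
    by (simp add: induced_IF_def)
  also have "\<dots> = \<alpha> (sem P F (App f xs))"
    unfolding args by simp
  finally show ?case .
qed

theorem lemma5p3:
  fixes ar :: "'op::finite \<Rightarrow> nat"
    and P :: "'ap \<Rightarrow> 's set" and F :: "'op \<Rightarrow> 's set list \<Rightarrow> 's set"
    and \<alpha> :: "'s set \<Rightarrow> 'a::complete_lattice" and \<gamma> :: "'a \<Rightarrow> 's set"
  assumes arity: "\<forall>f. ar f \<ge> 1"
    and GI: "galois_insertion \<alpha> \<gamma>"
  shows "(\<forall>(IP1 :: 'ap \<Rightarrow> 'a) IF1 IP2 IF2.
            strongly_preserving ar \<alpha> (sem P F) (sem IP1 IF1) \<longrightarrow>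
            strongly_preserving ar \<alpha> (sem P F) (sem IP2 IF2) \<longrightarrow>
            (\<forall>\<phi>. wf_formula ar \<phi> \<longrightarrow> sem IP1 IF1 \<phi> = sem IP2 IF2 \<phi>))
       \<and> (\<forall>(IP :: 'ap \<Rightarrow> 'a) IF.
            strongly_preserving ar \<alpha> (sem P F) (sem IP IF) \<longrightarrow>
            strongly_preserving ar \<alpha> (sem P F) (sem (induced_IP \<alpha> P) (induced_IF \<alpha> \<gamma> F)))"
proof (intro conjI allI impI)
  fix IP1 :: "'ap \<Rightarrow> 'a" and IF1 IP2 IF2 and \<phi> :: "('ap, 'op) formula"
  assume "strongly_preserving ar \<alpha> (sem P F) (sem IP1 IF1)"
    and "strongly_preserving ar \<alpha> (sem P F) (sem IP2 IF2)" and "wf_formula ar \<phi>"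
  then show "sem IP1 IF1 \<phi> = sem IP2 IF2 \<phi>"
    by (simp add: strongly_preserving_iff_closed[OF GI])
next
  fix IP :: "'ap \<Rightarrow> 'a" and IF
  assume "strongly_preserving ar \<alpha> (sem P F) (sem IP IF)"
  then have closed: "\<forall>\<phi>. wf_formula ar \<phi> \<longrightarrow> \<gamma> (\<alpha> (sem P F \<phi>)) = sem P F \<phi>"
    by (simp add: strongly_preserving_iff_closed[OF GI])
  then show "strongly_preserving ar \<alpha> (sem P F) (sem (induced_IP \<alpha> P) (induced_IF \<alpha> \<gamma> F))"
    by (simp add: strongly_preserving_iff_closed[OF GI] sem_induced_eq_alpha)
qed

end
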